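(* Let $(G,\tau)$ be a non-discrete metrizable topological group. Then the coarse structure of $(G,\mathcal{S}_\tau)$ does not have a linearly ordered (by inclusion) base. In particular, $(G,\mathcal{S}_\tau)$ is not metrizable.
   Context: $\mathcal{S}_\tau$ is the smallest group ideal on $G$ containing every set $\{x\}\cup\{x_n:n\in\omega\}$ with $x_n\to x$ in $(G,\tau)$. A group ideal on $G$ is a family of subsets containing all finite subsets, closed under subsets and under $(A,B)\mapsto AB^{-1}$; it defines the coarse structure on $G$ with base $\{\{(x,y):x\in Ay\}:A\in\mathcal{I}\}$. A base of a coarse structure $\mathcal{E}$ is a subfamily $\mathcal{E}'$ such that every $E\in\mathcal{E}$ is contained in some member of $\mathcal{E}'$. A coarse space is metrizable iff its coarse structure has a countable base. *)

theory Defs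
  imports "HOL-Analysis.Analysis"
begin

text \<open>Groups are written additively (class group_add, not necessarily commutative);
  the product A B^{-1} becomes the set of all a - b = a + (- b).\<close>

definition set_diff_grp :: "'a::group_add set \<Rightarrow> 'a set \<Rightarrow> 'a set" where
  "set_diff_grp A B = {a - b | a b. a \<in> A \<and> b \<in> B}"

definition group_ideal :: "'a::group_add set set \<Rightarrow> bool" where
  "group_ideal I \<longleftrightarrow>
     (\<forall>F. finite F \<longrightarrow> F \<in> I) \<and>
     (\<forall>A\<in>I. \<forall>B. B \<subseteq> A \<longrightarrow> B \<in> I) \<and>
     (\<forall>A\<in>I. \<forall>B\<in>I. set_diff_grp A B \<in> I)"

definition S_tau :: "'a::{topological_space, group_add} set set" where
  "S_tau = \<Inter>{I. group_ideal I \<and>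
       (\<forall>(X::nat \<Rightarrow> 'a) x. X \<longlonglongrightarrow> x \<longrightarrow> insert x (range X) \<in> I)}"

definition entourage :: "'a::group_add set \<Rightarrow> ('a \<times> 'a) set" where
  "entourage A = {(x, y). x - y \<in> A}"

definition coarse_structure :: "'a::group_add set set \<Rightarrow> ('a \<times> 'a) set set" where
  "coarse_structure I = {E. \<exists>A\<in>I. E \<subseteq> entourage A}"

definition is_base :: "('a \<times> 'a) set set \<Rightarrow> ('a \<times> 'a) set set \<Rightarrow> bool" where
  "is_base B C \<longleftrightarrow> B \<subseteq> C \<and> (\<forall>E\<in>C. \<exists>E'\<in>B. E \<subseteq> E')"

definition linearly_ordered :: "'b set set \<Rightarrow> bool" where
  "linearly_ordered B \<longleftrightarrow> (\<forall>X\<in>B. \<forall>Y\<in>B. X \<subseteq> Y \<or> Y \<subseteq> X)"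

definition coarse_metrizable :: "('a \<times> 'a) set set \<Rightarrow> bool" where
  "coarse_metrizable C \<longleftrightarrow> (\<exists>B. countable B \<and> is_base B C)"

end

theory Submission
  imports Defs
begin

text \<open>Countable subsets of countable compact sets form a group ideal containing every convergent
  sequence with its limit, so each member of \<open>S_tau\<close> lies in a countable compact set. By Baire's
  theorem a countable compact set contains no nonempty set without isolated points; in a
  non-discrete metrizable group this forces empty interior, so a null sequence can avoid countably
  many countable compact sets, one at each scale, and no countable family of them covers
  \<open>S_tau\<close>. For a linearly ordered base, cover each point of the countable set \<open>H\<close> of finite sums
  of a nontrivial null sequence (a set without isolated points) by a base element: either these
  countably many elements are cofinal in the base, contradicting the countable case, or one base
  element contains them all and hence \<open>H\<close>.\<close>

lemma compact_insert_limit: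
  fixes f :: "nat \<Rightarrow> 'a::topological_space"
  assumes "f \<longlonglongrightarrow> l"
  shows "compact (insert l (range f))"
  using compactin_sequence_with_limit[of euclidean f l "range f"] assms by simp

definition countable_compact_bounded :: "'a::topological_space set set" where
  "countable_compact_bounded = {A. \<exists>K. compact K \<and> countable K \<and> A \<subseteq> K}"

lemma group_ideal_countable_compact_bounded:
  "group_ideal (countable_compact_bounded :: 'a::topological_group_add set set)"
  unfolding group_ideal_def
proof (intro conjI allI ballI impI)
  fix F :: "'a set" assume "finite F" then show "F \<in> countable_compact_bounded"
    unfolding countable_compact_bounded_def using finite_imp_compact countable_finite by blast
next
  fix A B :: "'a set" assume "A \<in> countable_compact_bounded" "B \<subseteq> A"
  then show "B \<in> countable_compact_bounded"
    unfolding countable_compact_bounded_def by blast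
next
  fix A B :: "'a set" assume "A \<in> countable_compact_bounded" "B \<in> countable_compact_bounded"
  then obtain K L where KL: "compact K" "countable K" "A \<subseteq> K" "compact L" "countable L" "B \<subseteq> L"
    unfolding countable_compact_bounded_def by blast
  let ?M = "(\<lambda>p. fst p - snd p) ` (K \<times> L)"
  have "compact ?M"
    by (intro compact_continuous_image compact_Times KL continuous_intros)
  moreover have "countable ?M" using KL by auto
  moreover have "set_diff_grp A B \<subseteq> ?M"
    unfolding set_diff_grp_def using KL by force
  ultimately show "set_diff_grp A B \<in> countable_compact_bounded"
    unfolding countable_compact_bounded_def by blast
qed

lemma S_tau_subset_countable_compact_bounded:
  "(S_tau :: 'a::topological_group_add set set) \<subseteq> countable_compact_bounded"
proof -
  have "\<forall>(X::nat \<Rightarrow> 'a) x. X \<longlonglongrightarrow> x \<longrightarrow> insert x (range X) \<in> countable_compact_bounded"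
    unfolding countable_compact_bounded_def using compact_insert_limit by blast
  then show ?thesis
    unfolding S_tau_def using group_ideal_countable_compact_bounded by blast
qed

lemma S_tau_insert_limit: "X \<longlonglongrightarrow> x \<Longrightarrow> insert x (range X) \<in> S_tau"
  unfolding S_tau_def by blast

lemma S_tau_finite: "finite F \<Longrightarrow> F \<in> S_tau"
  unfolding S_tau_def group_ideal_def by blast

lemma countable_compact_no_perfect_subset:
  fixes K :: "'a::metric_space set"
  assumes "compact K" "countable K" "H \<subseteq> K" "H \<noteq> {}" "\<And>h. h \<in> H \<Longrightarrow> h islimpt H"
  shows False
proof -
  let ?T = "closure H"
  let ?X = "top_of_set ?T"
  have "closed K" using assms(1) by (rule compact_imp_closed)
  then have TK: "?T \<subseteq> K" using assms(3) by (rule closure_minimal[rotated])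
  then have "compact ?T" using assms(1) closed_closure compact_Int_closed[of K ?T] by (simp add: Int_absorb1)
  then have "compact_space ?X" by (simp add: compact_space_subtopology)
  moreover have "Hausdorff_space ?X" by (simp add: Hausdorff_space_subtopology)
  ultimately have "locally_compact_space ?X \<and> regular_space ?X"
    by (simp add: compact_imp_locally_compact_space compact_Hausdorff_imp_regular_space)
  moreover have "countable ((\<lambda>z. {z}) ` ?T)" using TK assms(2) countable_subset by blast
  moreover have "closedin ?X {z} \<and> ?X interior_of {z} = {}" if "z \<in> ?T" for z
  proof
    show "closedin ?X {z}" using that by (simp add: closedin_subtopology_refl)
    have "z islimpt H"
      using that assms(5) by (auto simp: closure_def)
    then have "z islimpt ?T" by (meson closure_subset islimpt_subset)
    then have "\<not> openin ?X {z}" by (auto simp: openin_open islimpt_def)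
    then show "?X interior_of {z} = {}"
      by (metis interior_of_subset openin_interior_of subset_singletonD)
  qed
  ultimately have "?X interior_of \<Union>((\<lambda>z. {z}) ` ?T) = {}"
    by (intro Baire_category_alt) auto
  then show False
    using assms(4) interior_of_topspace[of ?X] by (simp add: eq_commute[of "{}"])
qed

lemma LIMSEQ_dist_less_inverse_Suc:
  fixes y :: "nat \<Rightarrow> 'a::metric_space"
  assumes "\<And>n. dist (y n) a < inverse (Suc n)"
  shows "y \<longlonglongrightarrow> a"
proof -
  have "norm (dist (y n) a) \<le> inverse (Suc n)" for n
    using assms[of n] by simp
  then have "(\<lambda>n. dist (y n) a) \<longlonglongrightarrow> 0"
    by (intro Lim_null_comparison[OF always_eventually LIMSEQ_inverse_real_of_nat] allI)
  then show ?thesis by (rule tendsto_dist_iff[THEN iffD2])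
qed

lemma nondiscrete_group_not_open_singleton:
  assumes "\<exists>x::'a::topological_group_add. \<not> open {x}"
  shows "\<not> open {z::'a}"
proof
  assume "open {z}"
  obtain x :: 'a where x: "\<not> open {x}" using assms by blast
  have "open ((\<lambda>y. y - x + z) -` {z})"
    by (intro open_vimage \<open>open {z}\<close> continuous_intros)
  moreover have "(\<lambda>y. y - x + z) -` {z} = {x}"
    by (auto, metis add.left_neutral add_right_cancel right_minus_eq)
  ultimately show False using x by simp
qed

lemma nondiscrete_group_interior_countable_compact:
  fixes K :: "'a::{metric_space, topological_group_add} set"
  assumes "\<exists>x::'a. \<not> open {x}" "compact K" "countable K"
  shows "interior K = {}"
proof (rule ccontr)
  assume nonempty: "interior K \<noteq> {}"
  have "h islimpt interior K" if "h \<in> interior K" for h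
  proof -
    have "h islimpt UNIV"
      using nondiscrete_group_not_open_singleton[OF assms(1)] by (simp add: islimpt_UNIV_iff)
    moreover have "eventually (\<lambda>y. y \<in> interior K) (at h)"
      using that by (simp add: eventually_at_in_open')
    ultimately show ?thesis using islimpt_Int_eventually by fastforce
  qed
  then show False
    using countable_compact_no_perfect_subset[OF assms(2,3) interior_subset nonempty] by blast
qed

lemma nondiscrete_group_countable_perfect_set:
  assumes "\<exists>x::'a. \<not> open {x}"
  obtains H :: "'a::{metric_space, topological_group_add} set"
    where "countable H" "H \<noteq> {}" "\<And>h. h \<in> H \<Longrightarrow> h islimpt H"
proof -
  have "(0::'a) islimpt UNIV"
    using nondiscrete_group_not_open_singleton[OF assms] by (simp add: islimpt_UNIV_iff)
  then obtain x :: "nat \<Rightarrow> 'a" where x: "\<And>n. x n \<noteq> 0" "x \<longlonglongrightarrow> 0"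
    unfolding islimpt_sequential by blast
  define H where "H = range (\<lambda>ns. sum_list (map x ns))"
  have "h islimpt H" if "h \<in> H" for h
  proof -
    obtain ns where h: "h = sum_list (map x ns)" using \<open>h \<in> H\<close> unfolding H_def by blast
    have "h + x n \<in> H - {h}" for n
    proof -
      have "h + x n = sum_list (map x (ns @ [n]))" using h by simp
      then have "h + x n \<in> H" unfolding H_def by (metis rangeI)
      moreover have "h + x n \<noteq> h" using x(1) by (metis add_0_right add_left_cancel)
      ultimately show ?thesis by blast
    qed
    moreover have "(\<lambda>n. h + x n) \<longlonglongrightarrow> h"
      using tendsto_add[OF tendsto_const x(2)] by simp
    ultimately show "h islimpt H" unfolding islimpt_sequential by (intro exI[of _ "\<lambda>n. h + x n"]) simp
  qed
  moreover have "countable H" "H \<noteq> {}" unfolding H_def by simp_all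
  ultimately show ?thesis using that by blast
qed

lemma countable_family_in_countable_compact_bounded:
  assumes "countable \<D>" "\<D> \<subseteq> countable_compact_bounded"
  obtains K :: "nat \<Rightarrow> 'a::topological_space set"
    where "\<And>n. compact (K n)" "\<And>n. countable (K n)" "\<And>D. D \<in> \<D> \<Longrightarrow> \<exists>n. D \<subseteq> K n"
proof -
  \<comment> \<open>adding \<open>{}\<close> keeps the family nonempty, where \<open>from_nat_into\<close> enumerates it\<close>
  let ?f = "from_nat_into (insert {} \<D>)"
  have "\<forall>n. \<exists>K. compact K \<and> countable K \<and> ?f n \<subseteq> K"
    using assms(2) from_nat_into[of "insert {} \<D>"] compact_empty countable_empty
    unfolding countable_compact_bounded_def by blast
  then obtain K where K: "\<And>n. compact (K n)" "\<And>n. countable (K n)" "\<And>n. ?f n \<subseteq> K n"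
    by metis
  have "\<exists>n. D \<subseteq> K n" if "D \<in> \<D>" for D
    using that K(3) from_nat_into_surj[of "insert {} \<D>" D] assms(1) by blast
  then show ?thesis using that K by blast
qed

lemma S_tau_not_covered_by_countable_family:
  fixes \<D> :: "'a::{metric_space, topological_group_add} set set"
  assumes "\<exists>x::'a. \<not> open {x}" "countable \<D>" "\<D> \<subseteq> countable_compact_bounded"
  shows "\<exists>X\<in>S_tau. \<forall>D\<in>\<D>. \<not> X \<subseteq> D"
proof -
  obtain K :: "nat \<Rightarrow> 'a set"
    where K: "\<And>n. compact (K n)" "\<And>n. countable (K n)" "\<And>D. D \<in> \<D> \<Longrightarrow> \<exists>n. D \<subseteq> K n"
    using countable_family_in_countable_compact_bounded[OF assms(2,3)] by blast
  define L where "L n = \<Union>(K ` {..n})" for n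
  have "interior (L n) = {}" for n
    unfolding L_def using K
    by (intro nondiscrete_group_interior_countable_compact assms(1) compact_UN) auto
  then have "\<exists>y. dist y 0 < inverse (Suc n) \<and> y \<notin> L n" for n
    using interior_maximal[OF _ open_ball, of 0 "inverse (Suc n)" "L n"]
    by (force simp: dist_commute)
  then obtain y where y: "\<And>n. dist (y n) 0 < inverse (Suc n)" "\<And>n. y n \<notin> L n"
    by metis
  then have "insert 0 (range y) \<in> S_tau"
    by (intro S_tau_insert_limit LIMSEQ_dist_less_inverse_Suc)
  moreover have "\<not> insert 0 (range y) \<subseteq> D" if "D \<in> \<D>" for D
    using K(3)[OF that] y(2) unfolding L_def by blast
  ultimately show ?thesis by blast
qed

lemma S_tau_not_covered_by_chain:
  fixes \<D> :: "'a::{metric_space, topological_group_add} set set"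
  assumes nondiscrete: "\<exists>x::'a. \<not> open {x}"
    and \<D>: "\<D> \<subseteq> countable_compact_bounded" "linearly_ordered \<D>"
    and covers: "\<forall>X\<in>S_tau. \<exists>D\<in>\<D>. X \<subseteq> D"
  shows False
proof -
  obtain H :: "'a set" where H: "countable H" "H \<noteq> {}" "\<And>h. h \<in> H \<Longrightarrow> h islimpt H"
    using nondiscrete_group_countable_perfect_set[OF nondiscrete] by blast
  have "\<forall>h\<in>H. \<exists>D\<in>\<D>. h \<in> D"
    using covers S_tau_finite[of "{h}" for h] by blast
  then obtain D where D: "\<And>h. h \<in> H \<Longrightarrow> D h \<in> \<D> \<and> h \<in> D h" by metis
  show False
  proof (cases "\<exists>E\<in>\<D>. \<forall>h\<in>H. \<not> E \<subseteq> D h")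
    case True
    then obtain E where E: "E \<in> \<D>" "\<forall>h\<in>H. \<not> E \<subseteq> D h" by blast
    then have "D h \<subseteq> E" if "h \<in> H" for h
      using \<D>(2) D that unfolding linearly_ordered_def by blast
    then have "H \<subseteq> E" using D by blast
    moreover obtain K where K: "compact K" "countable K" "E \<subseteq> K"
      using E(1) \<D>(1) unfolding countable_compact_bounded_def by blast
    ultimately show False
      using countable_compact_no_perfect_subset[OF K(1,2) _ H(2,3)] K(3) by blast
  next
    case False
    then have covers': "\<forall>X\<in>S_tau. \<exists>D'\<in>D ` H. X \<subseteq> D'"
      using covers by (meson imageI order_trans)
    have "D ` H \<subseteq> countable_compact_bounded" using D \<D>(1) by blast
    then obtain X where "X \<in> S_tau" "\<forall>D'\<in>D ` H. \<not> X \<subseteq> D'"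
      using S_tau_not_covered_by_countable_family[OF nondiscrete countable_image[OF H(1)]] by blast
    then show False using covers' by blast
  qed
qed

definition entourage_section :: "('a::group_add \<times> 'a) set \<Rightarrow> 'a set" where
  "entourage_section E = {x. (x, 0) \<in> E}"

lemma entourage_section_mono: "E \<subseteq> F \<Longrightarrow> entourage_section E \<subseteq> entourage_section F"
  unfolding entourage_section_def by blast

lemma is_base_coarse_structure_sections:
  assumes "is_base B (coarse_structure I)"
  shows "\<And>E. E \<in> B \<Longrightarrow> \<exists>A\<in>I. entourage_section E \<subseteq> A"
    and "\<And>X. X \<in> I \<Longrightarrow> \<exists>E\<in>B. X \<subseteq> entourage_section E"
proof -
  fix E assume "E \<in> B"
  then have "E \<in> coarse_structure I" using assms unfolding is_base_def by blast
  then obtain A where "A \<in> I" "E \<subseteq> entourage A" unfolding coarse_structure_def by blast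
  then have "entourage_section E \<subseteq> A"
    unfolding entourage_section_def entourage_def by auto
  then show "\<exists>A\<in>I. entourage_section E \<subseteq> A" using \<open>A \<in> I\<close> by blast
next
  fix X assume "X \<in> I"
  then have "entourage X \<in> coarse_structure I"
    unfolding coarse_structure_def by blast
  then obtain E where "E \<in> B" "entourage X \<subseteq> E"
    using assms unfolding is_base_def by blast
  then have "X \<subseteq> entourage_section E"
    unfolding entourage_section_def entourage_def by auto
  then show "\<exists>E\<in>B. X \<subseteq> entourage_section E" using \<open>E \<in> B\<close> by blast
qed

lemma is_base_coarse_structure_S_tau:
  assumes base: "is_base B (coarse_structure (S_tau :: 'a::topological_group_add set set))"
  shows "entourage_section ` B \<subseteq> countable_compact_bounded"
    and "\<forall>X\<in>S_tau. \<exists>D\<in>entourage_section ` B. X \<subseteq> D"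
proof -
  show "entourage_section ` B \<subseteq> countable_compact_bounded"
  proof
    fix D assume "D \<in> entourage_section ` B"
    then obtain A where "A \<in> S_tau" "D \<subseteq> A"
      using is_base_coarse_structure_sections(1)[OF base] by blast
    moreover have "A \<in> countable_compact_bounded"
      using \<open>A \<in> S_tau\<close> S_tau_subset_countable_compact_bounded by blast
    ultimately show "D \<in> countable_compact_bounded"
      unfolding countable_compact_bounded_def by blast
  qed
  show "\<forall>X\<in>S_tau. \<exists>D\<in>entourage_section ` B. X \<subseteq> D"
    using is_base_coarse_structure_sections(2)[OF base] by blast
qed

theorem theorem8:
  assumes nondiscrete: "\<exists>x::'a::{metric_space, topological_group_add}. \<not> open {x}"
  shows "\<not> (\<exists>B. is_base B (coarse_structure (S_tau :: 'a set set)) \<and> linearly_ordered B) \<and>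
         \<not> coarse_metrizable (coarse_structure (S_tau :: 'a set set))"
proof -
  have "\<not> linearly_ordered B" if base: "is_base B (coarse_structure (S_tau :: 'a set set))" for B
  proof
    assume "linearly_ordered B"
    then have "linearly_ordered (entourage_section ` B)"
      using entourage_section_mono unfolding linearly_ordered_def by (metis imageE)
    then show False
      using S_tau_not_covered_by_chain[OF nondiscrete] is_base_coarse_structure_S_tau[OF base]
      by blast
  qed
  moreover have "\<not> countable B" if base: "is_base B (coarse_structure (S_tau :: 'a set set))" for B
  proof
    assume "countable B"
    then obtain X where "X \<in> S_tau" "\<forall>D\<in>entourage_section ` B. \<not> X \<subseteq> D"
      using S_tau_not_covered_by_countable_family[OF nondiscrete countable_image
          is_base_coarse_structure_S_tau(1)[OF base]]
      by blast
    then show False using is_base_coarse_structure_S_tau(2)[OF base] by blast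
  qed
  ultimately show ?thesis unfolding coarse_metrizable_def by blast
qed

end
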